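(* Let $(\Sigma,E)$ be an algebraic theory with free monad $(T,\eta,\mu)$. If $f:(X,I^X)\to(Y,I^Y)$ is a homomorphism of $(\Sigma^{\mathrm{s}},E^{\mathrm{s}})$-algebras, and $\alpha:TX\to X$, $\beta:TY\to Y$ are given by $\alpha(\overline{t})=I^X(t)_{I^X(\mathsf{a})}$ and $\beta(\overline{s})=I^Y(s)_{I^Y(\mathsf{a})}$, then $f$ is a $T$-semialgebra homomorphism $(X,\alpha)\to(Y,\beta)$, i.e. $f\circ\alpha=\beta\circ Tf$.
   Context: $T=T_{\Sigma,E}$: $TX$ is the set of $\Sigma$-terms over $X$ modulo the smallest congruence containing all substitution instances of $E$; $Tf$ applies $f$ to variables. For a $\Sigma^{\mathrm{s}}$-algebra $(X,I)$, $I(t)_{I(\mathsf{a})}$ is the value of the $\Sigma$-term $t$ over $X$ obtained by sending each element $x$ occurring as a variable to $I(\mathsf{a})(x)$ and interpreting operations via $I$ (independent of the representative). The theory $(\Sigma^{\mathrm{s}},E^{\mathrm{s}})$: $\Sigma^{\mathrm{s}}=\Sigma\uplus\{\mathsf{a}:1\}$ and $E^{\mathrm{s}}$ consists of $\mathsf{a}\mathsf{a}v_1=\mathsf{a}v_1$; $\mathsf{a}(\mathsf{op}(v_1,\dots,v_n))=\mathsf{op}(v_1,\dots,v_n)$ and $\mathsf{op}(\mathsf{a}v_1,\dots,\mathsf{a}v_n)=\mathsf{op}(v_1,\dots,v_n)$ for every $(\mathsf{op}:n)\in\Sigma$; and $t(\mathsf{a}v_1,\dots,\mathsf{a}v_n)=s(\mathsf{a}v_1,\dots,\mathsf{a}v_n)$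 for every equation $t=s$ in $E$. A $T$-semialgebra is $\alpha:TX\to X$ with $\alpha\circ\mu_X=\alpha\circ T\alpha$. *)

theory Defs
  imports Main
begin

datatype ('o, 'v) trm = Var 'v | Op 'o "('o, 'v) trm list"

fun wf_trm :: "('o \<Rightarrow> nat) \<Rightarrow> ('o, 'v) trm \<Rightarrow> bool" where
  "wf_trm ar (Var x) = True"
| "wf_trm ar (Op g ts) = (length ts = ar g \<and> (\<forall>t\<in>set ts. wf_trm ar t))"

fun subst :: "('v \<Rightarrow> ('o, 'x) trm) \<Rightarrow> ('o, 'v) trm \<Rightarrow> ('o, 'x) trm" where
  "subst \<sigma> (Var v) = \<sigma> v"
| "subst \<sigma> (Op g ts) = Op g (map (subst \<sigma>) ts)"

fun eval :: "('o \<Rightarrow> 'x list \<Rightarrow> 'x) \<Rightarrow> ('v \<Rightarrow> 'x) \<Rightarrow> ('o, 'v) trm \<Rightarrow> 'x" where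
  "eval I v (Var x) = v x"
| "eval I v (Op g ts) = I g (map (eval I v) ts)"

inductive_set cong_E :: "('o \<Rightarrow> nat) \<Rightarrow> (('o, 'v) trm \<times> ('o, 'v) trm) set
    \<Rightarrow> (('o, 'x) trm \<times> ('o, 'x) trm) set"
  for ar :: "'o \<Rightarrow> nat" and E :: "(('o, 'v) trm \<times> ('o, 'v) trm) set" where
  refl: "wf_trm ar t \<Longrightarrow> (t, t) \<in> cong_E ar E"
| sym: "(t, s) \<in> cong_E ar E \<Longrightarrow> (s, t) \<in> cong_E ar E"
| trans: "(t, s) \<in> cong_E ar E \<Longrightarrow> (s, u) \<in> cong_E ar E \<Longrightarrow> (t, u) \<in> cong_E ar E"
| op: "length ts = ar g \<Longrightarrow> length ss = ar g \<Longrightarrow>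
       (\<forall>i < ar g. (ts ! i, ss ! i) \<in> cong_E ar E) \<Longrightarrow> (Op g ts, Op g ss) \<in> cong_E ar E"
| inst: "(l, r) \<in> E \<Longrightarrow> (\<forall>v. wf_trm ar (\<sigma> v)) \<Longrightarrow>
       (subst \<sigma> l, subst \<sigma> r) \<in> cong_E ar E"

text \<open>The underlying set TX of the free monad T = T_{Sigma,E}.\<close>
definition TX :: "('o \<Rightarrow> nat) \<Rightarrow> (('o, 'v) trm \<times> ('o, 'v) trm) set
    \<Rightarrow> ('o, 'x) trm set set" where
  "TX ar E = {t. wf_trm ar t} // cong_E ar E"

text \<open>Tf: apply f to the variables (well defined on classes).\<close>
definition Tmap :: "('o \<Rightarrow> nat) \<Rightarrow> (('o, 'v) trm \<times> ('o, 'v) trm) set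
    \<Rightarrow> ('x \<Rightarrow> 'y) \<Rightarrow> ('o, 'x) trm set \<Rightarrow> ('o, 'y) trm set" where
  "Tmap ar E f C = cong_E ar E `` {map_trm id f (SOME t. t \<in> C)}"

text \<open>A (Sigma^s, E^s)-algebra on the carrier 'x, with operations I and the extra unary
  operation a; the equations E^s written out.\<close>
definition ss_alg :: "('o \<Rightarrow> nat) \<Rightarrow> (('o, 'v) trm \<times> ('o, 'v) trm) set
    \<Rightarrow> ('o \<Rightarrow> 'x list \<Rightarrow> 'x) \<Rightarrow> ('x \<Rightarrow> 'x) \<Rightarrow> bool" where
  "ss_alg ar E I a \<longleftrightarrow>
     (\<forall>x. a (a x) = a x)
   \<and> (\<forall>g xs. length xs = ar g \<longrightarrow> a (I g xs) = I g xs)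
   \<and> (\<forall>g xs. length xs = ar g \<longrightarrow> I g (map a xs) = I g xs)
   \<and> (\<forall>(l, r) \<in> E. \<forall>v. eval I (a \<circ> v) l = eval I (a \<circ> v) r)"

definition ss_hom :: "('o \<Rightarrow> nat) \<Rightarrow> ('o \<Rightarrow> 'x list \<Rightarrow> 'x) \<Rightarrow> ('x \<Rightarrow> 'x)
    \<Rightarrow> ('o \<Rightarrow> 'y list \<Rightarrow> 'y) \<Rightarrow> ('y \<Rightarrow> 'y) \<Rightarrow> ('x \<Rightarrow> 'y) \<Rightarrow> bool" where
  "ss_hom ar IX aX IY aY f \<longleftrightarrow>
     (\<forall>g xs. length xs = ar g \<longrightarrow> f (IX g xs) = IY g (map f xs))
   \<and> (\<forall>x. f (aX x) = aY (f x))"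

text \<open>The map TX -> X, class of t |-> I(t)_{I(a)} (computed on a chosen representative).\<close>
definition sa_of :: "('o \<Rightarrow> 'x list \<Rightarrow> 'x) \<Rightarrow> ('x \<Rightarrow> 'x) \<Rightarrow> ('o, 'x) trm set \<Rightarrow> 'x" where
  "sa_of I a C = eval I a (SOME t. t \<in> C)"

end

theory Submission
  imports Defs
begin

text \<open>The value of a well-formed term under the valuation \<open>a\<close> is a fixed point of \<open>a\<close>, so
  evaluating a substitution instance of an equation of \<open>E\<close> amounts to evaluating the equation
  at an \<open>a\<close>-fixed valuation, where the equations of \<open>E\<^sup>s\<close> make both sides agree. Hence
  evaluation is constant on congruence classes and the semialgebra map may be computed on any
  representative. A homomorphism commutes with evaluation, so a representative \<open>t\<close> of \<open>C\<close>
  and its renaming \<open>Tf t\<close>, a representative of \<open>Tf C\<close>, give the two sides of the equation.\<close>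

lemma wf_trm_subst:
  "wf_trm ar l \<Longrightarrow> (\<forall>v. wf_trm ar (\<sigma> v)) \<Longrightarrow> wf_trm ar (subst \<sigma> l)"
  by (induction l) auto

lemma wf_trm_map_trm: "wf_trm ar t \<Longrightarrow> wf_trm ar (map_trm id f t)"
  by (induction t) auto

lemma eval_subst: "eval I v (subst \<sigma> l) = eval I (eval I v \<circ> \<sigma>) l"
  by (induction l) (auto cong: map_cong)

lemma cong_E_wf_trm:
  assumes "\<forall>(l, r) \<in> E. wf_trm ar l \<and> wf_trm ar r"
  shows "(t, s) \<in> cong_E ar E \<Longrightarrow> wf_trm ar t \<and> wf_trm ar s"
proof (induction rule: cong_E.induct)
  case (op ts g ss)
  then show ?case by (auto simp: in_set_conv_nth)
next
  case (inst l r \<sigma>)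
  then show ?case using assms wf_trm_subst by fastforce
qed auto

lemma wf_trm_some_in_TX:
  assumes "\<forall>(l, r) \<in> E. wf_trm ar l \<and> wf_trm ar r" and "C \<in> TX ar E"
  shows "wf_trm ar (SOME t. t \<in> C)"
proof -
  obtain t where "wf_trm ar t" and C: "C = cong_E ar E `` {t}"
    using assms(2) by (auto simp: TX_def quotient_def)
  then have "t \<in> C" by (auto intro: cong_E.refl)
  then have "(SOME t. t \<in> C) \<in> C" by (rule someI)
  with C show "wf_trm ar (SOME t. t \<in> C)" using cong_E_wf_trm[OF assms(1)] by blast
qed

lemma ss_alg_eval_fixed:
  assumes "ss_alg ar E I a" and "wf_trm ar t"
  shows "a (eval I a t) = eval I a t"
  using assms by (cases t) (simp_all add: ss_alg_def)

lemma ss_alg_eval_cong_E: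
  assumes alg: "ss_alg ar E I a"
  shows "(t, s) \<in> cong_E ar E \<Longrightarrow> eval I a t = eval I a s"
proof (induction rule: cong_E.induct)
  case (op ts g ss)
  then have "map (eval I a) ts = map (eval I a) ss"
    by (intro nth_equalityI) auto
  then show ?case by simp
next
  case (inst l r \<sigma>)
  have fixed: "a \<circ> (eval I a \<circ> \<sigma>) = eval I a \<circ> \<sigma>"
    using ss_alg_eval_fixed[OF alg] inst.hyps(2) by (auto simp: fun_eq_iff)
  have "\<forall>(l, r) \<in> E. \<forall>v. eval I (a \<circ> v) l = eval I (a \<circ> v) r"
    using alg by (simp add: ss_alg_def)
  then have "eval I (a \<circ> (eval I a \<circ> \<sigma>)) l = eval I (a \<circ> (eval I a \<circ> \<sigma>)) r"
    using inst.hyps(1) by blast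
  then show ?case by (simp add: eval_subst fixed)
qed auto

lemma sa_of_class:
  assumes "ss_alg ar E I a" and "wf_trm ar t"
  shows "sa_of I a (cong_E ar E `` {t}) = eval I a t"
proof -
  have "t \<in> cong_E ar E `` {t}" using assms(2) by (auto intro: cong_E.refl)
  then have "(t, SOME s. s \<in> cong_E ar E `` {t}) \<in> cong_E ar E"
    by (metis someI Image_singleton_iff)
  then show ?thesis
    unfolding sa_of_def using ss_alg_eval_cong_E[OF assms(1)] by (metis cong_E.sym)
qed

lemma ss_hom_eval_map_trm:
  assumes hom: "ss_hom ar IX aX IY aY f"
  shows "wf_trm ar t \<Longrightarrow> eval IY aY (map_trm id f t) = f (eval IX aX t)"
proof (induction t)
  case (Var x)
  then show ?case using hom by (simp add: ss_hom_def)
next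
  case (Op g ts)
  then have "map (eval IY aY \<circ> map_trm id f) ts = map (f \<circ> eval IX aX) ts"
    by (auto simp del: id_apply)
  then show ?case
    using hom Op.prems by (simp add: ss_hom_def id_apply[of g] del: id_apply map_eq_conv)
qed

theorem lemma15:
  fixes ar :: "'o \<Rightarrow> nat"
    and E :: "(('o, 'v) trm \<times> ('o, 'v) trm) set"
    and IX :: "'o \<Rightarrow> 'x list \<Rightarrow> 'x" and aX :: "'x \<Rightarrow> 'x"
    and IY :: "'o \<Rightarrow> 'y list \<Rightarrow> 'y" and aY :: "'y \<Rightarrow> 'y"
    and f :: "'x \<Rightarrow> 'y"
  assumes "\<forall>(l, r) \<in> E. wf_trm ar l \<and> wf_trm ar r"
    and "ss_alg ar E IX aX"
    and "ss_alg ar E IY aY"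
    and "ss_hom ar IX aX IY aY f"
  shows "\<forall>C \<in> (TX ar E :: ('o, 'x) trm set set).
           f (sa_of IX aX C) = sa_of IY aY (Tmap ar E f C)"
proof
  fix C :: "('o, 'x) trm set"
  assume "C \<in> TX ar E"
  define t where "t = (SOME t. t \<in> C)"
  have wf: "wf_trm ar t"
    unfolding t_def by (rule wf_trm_some_in_TX[OF assms(1) \<open>C \<in> TX ar E\<close>])
  have "sa_of IY aY (Tmap ar E f C) = sa_of IY aY (cong_E ar E `` {map_trm id f t})"
    by (simp add: Tmap_def t_def)
  also have "\<dots> = eval IY aY (map_trm id f t)"
    using sa_of_class[OF assms(3) wf_trm_map_trm[OF wf]] .
  also have "\<dots> = f (eval IX aX t)"
    using ss_hom_eval_map_trm[OF assms(4) wf] .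
  also have "\<dots> = f (sa_of IX aX C)"
    by (simp add: sa_of_def t_def)
  finally show "f (sa_of IX aX C) = sa_of IY aY (Tmap ar E f C)" ..
qed

end
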